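(* For $n\ge1$ and all $k\ge0$, $$S(n,k)=T(n,2k)+T(n,2k+1),\qquad P(n,k)=T(n,2k+1)+T(n,2k+2);$$ equivalently, $(1+x)T_n(x)=xS_n(x^2)+x^2P_n(x^2)$ for $n\ge1$.
   Context: For a permutation $\pi$ of $[n]=\{1,\dots,n\}$, ${\rm des}(\pi)=\#\{i\in[n-1]:\pi(i)>\pi(i+1)\}$. A double descent is an index $i\in[n-2]$ with $\pi(i)>\pi(i+1)>\pi(i+2)$; $\pi$ is simsun if for every $k\in[n]$ the subword of $\pi$ consisting of the letters in $[k]$ (in order of appearance) has no double descents. Let $\mathcal{RS}_n$ be the set of simsun permutations of $[n]$. $S(n,k)=\#\{\pi\in\mathcal{RS}_n:{\rm des}(\pi)=k\}$, $S_n(x)=\sum_kS(n,k)x^k$. An interior peak is an index $i\in\{2,\dots,n-1\}$ with $\pi(i-1)<\pi(i)>\pi(i+1)$, ${\rm pk}(\pi)$ their number, $P(n,k)=\#\{\pi\in\mathcal{RS}_n:{\rm pk}(\pi)=k\}$, $P_n(x)=\sum_kP(n,k)x^k$. The number of up-down runs ${\rm uprun}(\pi)$ is the number of alternating runs of the sequence $0,\pi(1),\dots,\pi(n)$ (one plus the number of interior positions where the sequence changes direction); $T(n,k)=\#\{\pi\in\mathcal{RS}_n:{\rm uprun}(\pi)=k\}$ and $T_n(x)=\sum_kT(n,k)x^k$. *)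

theory Defs
  imports "HOL-Combinatorics.Multiset_Permutations"
begin

text \<open>Permutations of [n] are represented as lists p (one-line notation, 0-based
  list indices) with p in permutations_of_set {1..n}.\<close>

definition des :: "nat list \<Rightarrow> nat" where
  "des p = card {i. Suc i < length p \<and> p ! i > p ! Suc i}"

definition has_double_descent :: "nat list \<Rightarrow> bool" where
  "has_double_descent w \<longleftrightarrow>
     (\<exists>i. i + 2 < length w \<and> w ! i > w ! (i + 1) \<and> w ! (i + 1) > w ! (i + 2))"

definition simsun :: "nat \<Rightarrow> nat list \<Rightarrow> bool" where
  "simsun n p \<longleftrightarrow> (\<forall>k\<in>{1..n}. \<not> has_double_descent (filter (\<lambda>x. x \<le> k) p))"

definition RS :: "nat \<Rightarrow> nat list set" where
  "RS n = {p \<in> permutations_of_set {1..n}. simsun n p}"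

definition pk :: "nat list \<Rightarrow> nat" where
  "pk p = card {i. 0 < i \<and> Suc i < length p \<and> p ! (i - 1) < p ! i \<and> p ! i > p ! Suc i}"

definition alt_runs :: "nat list \<Rightarrow> nat" where
  "alt_runs q = 1 + card {j. 0 < j \<and> Suc j < length q \<and>
       ((q ! (j - 1) < q ! j) \<noteq> (q ! j < q ! Suc j))}"

definition uprun :: "nat list \<Rightarrow> nat" where
  "uprun p = alt_runs (0 # p)"

definition S :: "nat \<Rightarrow> nat \<Rightarrow> nat" where
  "S n k = card {p \<in> RS n. des p = k}"

definition P :: "nat \<Rightarrow> nat \<Rightarrow> nat" where
  "P n k = card {p \<in> RS n. pk p = k}"

definition T :: "nat \<Rightarrow> nat \<Rightarrow> nat" where
  "T n k = card {p \<in> RS n. uprun p = k}"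

end

theory Submission
  imports Defs
begin

text \<open>In a permutation without double descents, the sequence 0, p(1), ..., p(n) changes direction
  exactly at the descents of p and right after those descents that are not at the end. Hence
  uprun p = 2 des p + 1 - [p ends with a descent] and pk p = des p - [p starts with a descent]. The second reduces to a symmetry: for every e, as many
  simsun permutations with e descents start with a descent as end with one. This is proved by
  induction on n: the simsun permutations of [n+1] arise uniquely by inserting n+1 into a simsun
  permutation p of [n] at a slot not followed by a descent, and among the children of p, those
  starting (resp. ending) with a descent and having e descents are counted by the same function of
  n, des p and e when p starts (resp. ends) with a descent, and number [e = des p + 1] otherwise.\<close>

lemma sum_comp_eq_sum_fibres:
  fixes f :: "'b \<Rightarrow> 'c::semiring_1"
  assumes "finite U" "A \<subseteq> U"
  shows "(\<Sum>x\<in>A. f (g x)) = (\<Sum>d\<in>g ` U. of_nat (card {x\<in>A. g x = d}) * f d)"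
proof -
  have "(\<Sum>x\<in>A. f (g x)) = (\<Sum>d\<in>g ` U. \<Sum>x\<in>{x\<in>A. g x = d}. f (g x))"
    using assms by (intro sum.group[symmetric]) (auto intro: finite_subset)
  also have "\<dots> = (\<Sum>d\<in>g ` U. of_nat (card {x\<in>A. g x = d}) * f d)"
    by (intro sum.cong refl) simp
  finally show ?thesis .
qed

lemma sum_if_eq_of_card_fibres_eq:
  fixes f h :: "'b \<Rightarrow> 'c::semiring_1"
  assumes "finite U"
    and fibres: "\<And>d. card {x\<in>U. \<phi> x \<and> g x = d} = card {x\<in>U. \<psi> x \<and> g x = d}"
  shows "(\<Sum>x\<in>U. if \<phi> x then f (g x) else h (g x)) = (\<Sum>x\<in>U. if \<psi> x then f (g x) else h (g x))"
proof -
  have compl: "card {x\<in>U. \<not> \<phi> x \<and> g x = d} = card {x\<in>U. \<not> \<psi> x \<and> g x = d}" for d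
  proof -
    have "card {x\<in>U. g x = d} = card {x\<in>U. \<rho> x \<and> g x = d} + card {x\<in>U. \<not> \<rho> x \<and> g x = d}" for \<rho>
      using assms(1) by (subst card_Un_disjoint[symmetric]) (auto intro: arg_cong[where f = card])
    from this[of \<phi>] this[of \<psi>] show ?thesis using fibres[of d] by simp
  qed
  have split: "(\<Sum>x\<in>U. if \<rho> x then f (g x) else h (g x)) =
      (\<Sum>d\<in>g ` U. of_nat (card {x\<in>U. \<rho> x \<and> g x = d}) * f d) +
      (\<Sum>d\<in>g ` U. of_nat (card {x\<in>U. \<not> \<rho> x \<and> g x = d}) * h d)" for \<rho>
  proof -
    have "{x \<in> U \<inter> {x. \<rho> x}. g x = d} = {x\<in>U. \<rho> x \<and> g x = d}"
      "{x \<in> U \<inter> - {x. \<rho> x}. g x = d} = {x\<in>U. \<not> \<rho> x \<and> g x = d}" for d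
      by auto
    then show ?thesis
      using assms(1) by (simp only: sum.If_cases sum_comp_eq_sum_fibres[of U] Int_lower1)
  qed
  show ?thesis unfolding split fibres compl ..
qed

lemma card_if_eq_of_card_fibres_eq:
  assumes "finite U"
    and "\<And>d. card {x\<in>U. \<phi> x \<and> g x = d} = card {x\<in>U. \<psi> x \<and> g x = d}"
  shows "card {x\<in>U. g x = (if \<phi> x then a else b)} = card {x\<in>U. g x = (if \<psi> x then a else b)}"
proof -
  have card_as_sum: "card {x\<in>U. g x = (if \<rho> x then a else b)} =
      (\<Sum>x\<in>U. if \<rho> x then (\<lambda>d. if d = a then 1 else 0) (g x)
                 else (\<lambda>d. if d = b then 1 else 0) (g x) :: nat)" for \<rho>
  proof -
    have "card {x\<in>U. g x = (if \<rho> x then a else b)} =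
        (\<Sum>x\<in>U. if g x = (if \<rho> x then a else b) then 1 else 0)"
      using assms(1) by (simp add: sum.inter_filter[symmetric])
    also have "\<dots> = (\<Sum>x\<in>U. if \<rho> x then (if g x = a then 1 else 0) else (if g x = b then 1 else 0))"
      by (intro sum.cong) auto
    finally show ?thesis by simp
  qed
  show ?thesis
    unfolding card_as_sum by (rule sum_if_eq_of_card_fibres_eq[OF assms])
qed

definition desc_at :: "'a::linorder list \<Rightarrow> nat \<Rightarrow> bool" where
  "desc_at p i \<longleftrightarrow> Suc i < length p \<and> p ! Suc i < p ! i"

definition insert_at :: "nat \<Rightarrow> 'a \<Rightarrow> 'a list \<Rightarrow> 'a list" where
  "insert_at j x p = take j p @ x # drop j p"

lemma desc_at_imp_less_length: "desc_at p i \<Longrightarrow> Suc i < length p"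
  by (simp add: desc_at_def)

lemma finite_desc_at: "finite {i. desc_at p i}"
  by (rule finite_subset[of _ "{..<length p}"]) (auto simp: desc_at_def)

lemma des_eq_card_desc_at: "des p = card {i. desc_at p i}"
  by (simp add: des_def desc_at_def)

lemma des_pos_if_desc_at: "desc_at p i \<Longrightarrow> 0 < des p"
  using finite_desc_at[of p] by (auto simp: des_eq_card_desc_at card_gt_0_iff)

lemma has_double_descent_iff_desc_at:
  "has_double_descent w \<longleftrightarrow> (\<exists>i. desc_at w i \<and> desc_at w (Suc i))"
  unfolding has_double_descent_def desc_at_def by (simp add: numeral_2_eq_2) (meson Suc_lessD)

lemma length_insert_at [simp]: "j \<le> length p \<Longrightarrow> length (insert_at j x p) = Suc (length p)"
  by (simp add: insert_at_def)

lemma set_insert_at [simp]: "set (insert_at j x p) = insert x (set p)"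
  by (metis insert_at_def append_take_drop_id list.simps(15) set_append Un_insert_right)

lemma distinct_insert_at_iff: "distinct (insert_at j x p) \<longleftrightarrow> x \<notin> set p \<and> distinct p"
  by (metis insert_at_def append_take_drop_id distinct.simps(2) distinct_append set_append
      Un_iff disjoint_insert(1) list.simps(15))

lemma filter_insert_at: "\<not> \<phi> x \<Longrightarrow> filter \<phi> (insert_at j x p) = filter \<phi> p"
  by (metis insert_at_def append_take_drop_id filter.simps(2) filter_append)

lemma nth_insert_at:
  assumes "j \<le> length p" "i \<le> length p"
  shows "insert_at j x p ! i = (if i < j then p ! i else if i = j then x else p ! (i - 1))"
  using assms by (auto simp: insert_at_def nth_append min_def nth_Cons' nth_drop)

lemma no_desc_at_Suc: "\<not> has_double_descent p \<Longrightarrow> desc_at p i \<Longrightarrow> \<not> desc_at p (Suc i)"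
  by (auto simp: has_double_descent_iff_desc_at)

context
  fixes j x :: nat and p :: "nat list"
  assumes j: "j \<le> length p" and x_max: "\<forall>y\<in>set p. y < x"
begin

lemma desc_at_insert_at:
  "desc_at (insert_at j x p) i \<longleftrightarrow>
     (if Suc i < j then desc_at p i else if Suc i = j then False
      else if i = j then j < length p else desc_at p (i - 1))"
proof -
  have "p ! k < x" if "k < length p" for k
    using x_max that by simp
  then show ?thesis
    using j by (auto simp: desc_at_def nth_insert_at Suc_le_eq) (meson less_asym)
qed

lemma des_insert_at:
  "des (insert_at j x p) =
     (if j = length p \<or> (0 < j \<and> desc_at p (j - 1)) then des p else Suc (des p))"
proof -
  define skip where "skip i = (if i < j then i else Suc i)" for i
  define D where "D = {i. desc_at p i \<and> \<not> (0 < j \<and> i = j - 1)}"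
  have "{i. desc_at (insert_at j x p) i} = skip ` D \<union> {i. i = j \<and> j < length p}"
  proof (rule set_eqI)
    fix i
    show "i \<in> {i. desc_at (insert_at j x p) i} \<longleftrightarrow> i \<in> skip ` D \<union> {i. i = j \<and> j < length p}"
    proof (cases "j < i")
      case True
      then have "i = skip (i - 1)" by (simp add: skip_def)
      with True show ?thesis
        by (auto simp: desc_at_insert_at D_def skip_def split: if_splits)
    next
      case False
      then have "i \<in> skip ` D \<longleftrightarrow> i < j \<and> i \<in> D"
        by (auto simp: skip_def)
      with False show ?thesis
        by (auto simp: desc_at_insert_at D_def)
    qed
  qed
  moreover have "j \<notin> skip ` D" by (auto simp: skip_def)
  moreover have "card (skip ` D) = card D"
    by (rule card_image) (auto simp: inj_on_def skip_def split: if_splits)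
  moreover have "card D = des p - (if 0 < j \<and> desc_at p (j - 1) then 1 else 0)"
  proof (cases "0 < j \<and> desc_at p (j - 1)")
    case True
    then have "D = {i. desc_at p i} - {j - 1}" by (auto simp: D_def)
    with True show ?thesis by (simp add: des_eq_card_desc_at finite_desc_at)
  next
    case False
    then have "D = {i. desc_at p i}" by (auto simp: D_def)
    with False show ?thesis by (auto simp: des_eq_card_desc_at)
  qed
  moreover have "finite D" using finite_desc_at[of p] by (auto simp: D_def intro: finite_subset)
  ultimately have "des (insert_at j x p) =
      des p - (if 0 < j \<and> desc_at p (j - 1) then 1 else 0) + (if j < length p then 1 else 0)"
    unfolding des_eq_card_desc_at by (auto simp: card_insert_if)
  then show ?thesis
    using j des_pos_if_desc_at[of p "j - 1"] desc_at_imp_less_length[of p "j - 1"] by auto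
qed

lemma desc_at_0_insert_at:
  "0 < length p \<Longrightarrow> desc_at (insert_at j x p) 0 \<longleftrightarrow> j = 0 \<or> (2 \<le> j \<and> desc_at p 0)"
  unfolding desc_at_insert_at by (cases "j = 0") auto

lemma desc_at_last_insert_at:
  assumes "2 \<le> length p"
  shows "desc_at (insert_at j x p) (length (insert_at j x p) - 2) \<longleftrightarrow>
    j \<noteq> length p \<and> (Suc j = length p \<or> desc_at p (length p - 2))"
proof -
  have "length (insert_at j x p) - 2 = length p - 1" using j by simp
  moreover have "length p - 1 - 1 = length p - 2" by simp
  ultimately show ?thesis
    using assms j by (auto simp: desc_at_insert_at)
qed

lemma has_double_descent_insert_at:
  assumes "\<not> has_double_descent p"
  shows "has_double_descent (insert_at j x p) \<longleftrightarrow> desc_at p j"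
proof
  assume "has_double_descent (insert_at j x p)"
  then obtain i where i: "desc_at (insert_at j x p) i" "desc_at (insert_at j x p) (Suc i)"
    by (auto simp: has_double_descent_iff_desc_at)
  have no_dd: "\<not> (desc_at p k \<and> desc_at p (Suc k))" for k
    using assms by (auto simp: has_double_descent_iff_desc_at)
  show "desc_at p j"
  proof (cases i j rule: linorder_cases)
    case greater
    then obtain k where "i = Suc k" using less_imp_Suc_add by blast
    with greater i no_dd[of k] show ?thesis by (auto simp: desc_at_insert_at)
  qed (use i no_dd[of i] in \<open>auto simp: desc_at_insert_at split: if_splits\<close>)
next
  assume "desc_at p j"
  then have "desc_at (insert_at j x p) j \<and> desc_at (insert_at j x p) (Suc j)"
    by (auto simp: desc_at_insert_at dest: desc_at_imp_less_length)
  then show "has_double_descent (insert_at j x p)"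
    by (auto simp: has_double_descent_iff_desc_at)
qed

end

lemma RSD:
  assumes "p \<in> RS m"
  shows "set p = {1..m}" "distinct p" "length p = m"
proof -
  show "set p = {1..m}" "distinct p"
    using assms by (auto simp: RS_def permutations_of_set_def)
  then show "length p = m" using distinct_card by fastforce
qed

lemma finite_RS: "finite (RS m)"
  unfolding RS_def by (rule finite_subset[OF _ finite_permutations_of_set[of "{1..m}"]]) auto

lemma simsun_imp_no_double_descent:
  assumes "set p \<subseteq> {1..m}" "simsun m p"
  shows "\<not> has_double_descent p"
proof (cases "m = 0")
  case True
  with assms(1) show ?thesis by (simp add: has_double_descent_def)
next
  case False
  moreover have "filter (\<lambda>x. x \<le> m) p = p" using assms(1) by (auto simp: filter_id_conv)
  ultimately show ?thesis using assms(2) by (metis simsun_def atLeastAtMost_iff le_refl less_one not_le)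
qed

lemma no_double_descent_RS: "p \<in> RS m \<Longrightarrow> \<not> has_double_descent p"
  using RSD(1)[of p m] simsun_imp_no_double_descent[of p m] by (simp add: RS_def)

lemma simsun_Suc_insert_at_iff:
  assumes "set p \<subseteq> {1..m}"
  shows "simsun (Suc m) (insert_at j (Suc m) p) \<longleftrightarrow>
    simsun m p \<and> \<not> has_double_descent (insert_at j (Suc m) p)"
proof -
  have "filter (\<lambda>x. x \<le> Suc m) (insert_at j (Suc m) p) = insert_at j (Suc m) p"
    using assms by (auto simp: filter_id_conv)
  moreover have "filter (\<lambda>x. x \<le> k) (insert_at j (Suc m) p) = filter (\<lambda>x. x \<le> k) p" if "k \<le> m" for k
    using that by (simp add: filter_insert_at)
  moreover have "{1..Suc m} = insert (Suc m) {1..m}" by auto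
  ultimately show ?thesis by (auto simp: simsun_def)
qed

lemma insert_at_Suc_in_RS_iff:
  assumes "Suc m \<notin> set p" "j \<le> length p"
  shows "insert_at j (Suc m) p \<in> RS (Suc m) \<longleftrightarrow> p \<in> RS m \<and> \<not> desc_at p j"
proof (cases "set p = {1..m}")
  case True
  have "set (insert_at j (Suc m) p) = {1..Suc m}"
    using True by (auto simp: atLeastAtMostSuc_conv)
  then have "insert_at j (Suc m) p \<in> permutations_of_set {1..Suc m} \<longleftrightarrow>
      p \<in> permutations_of_set {1..m}"
    using True assms(1) by (simp add: permutations_of_set_def distinct_insert_at_iff)
  moreover have "simsun (Suc m) (insert_at j (Suc m) p) \<longleftrightarrow> simsun m p \<and> \<not> desc_at p j"
  proof -
    have "\<forall>y\<in>set p. y < Suc m" using True by auto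
    moreover have "simsun m p \<Longrightarrow> \<not> has_double_descent p"
      using True simsun_imp_no_double_descent[of p m] by simp
    ultimately show ?thesis
      using True assms(2) simsun_Suc_insert_at_iff[of p m j] has_double_descent_insert_at[of j p]
      by auto
  qed
  ultimately show ?thesis by (simp add: RS_def)
next
  case False
  moreover have "set p = {1..m}" if "insert (Suc m) (set p) = {1..Suc m}"
  proof -
    have "set p = insert (Suc m) (set p) - {Suc m}" using assms(1) by simp
    also have "\<dots> = {1..m}" unfolding that by auto
    finally show ?thesis .
  qed
  ultimately show ?thesis by (auto simp: RS_def permutations_of_set_def)
qed

lemma RS_Suc_eq_image:
  "RS (Suc m) = (\<lambda>(p, j). insert_at j (Suc m) p) ` (SIGMA p:RS m. {j. j \<le> m \<and> \<not> desc_at p j})"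
proof (intro equalityI subsetI)
  fix q assume q: "q \<in> RS (Suc m)"
  then have "Suc m \<in> set q" using RSD(1) by fastforce
  then obtain xs ys where q_split: "q = xs @ Suc m # ys" by (meson split_list)
  then have "q = insert_at (length xs) (Suc m) (xs @ ys)" by (simp add: insert_at_def)
  moreover have "Suc m \<notin> set (xs @ ys)" using RSD(2)[OF q] q_split by auto
  ultimately have "xs @ ys \<in> RS m" "\<not> desc_at (xs @ ys) (length xs)"
    using q insert_at_Suc_in_RS_iff[of m "xs @ ys" "length xs"] by auto
  then have "(xs @ ys, length xs) \<in> (SIGMA p:RS m. {j. j \<le> m \<and> \<not> desc_at p j})"
    using RSD(3) by fastforce
  with \<open>q = insert_at (length xs) (Suc m) (xs @ ys)\<close> show
    "q \<in> (\<lambda>(p, j). insert_at j (Suc m) p) ` (SIGMA p:RS m. {j. j \<le> m \<and> \<not> desc_at p j})"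
    by (auto intro: rev_image_eqI)
next
  fix q assume "q \<in> (\<lambda>(p, j). insert_at j (Suc m) p) ` (SIGMA p:RS m. {j. j \<le> m \<and> \<not> desc_at p j})"
  then obtain p j where "q = insert_at j (Suc m) p" "p \<in> RS m" "j \<le> m" "\<not> desc_at p j" by auto
  then show "q \<in> RS (Suc m)"
    using RSD[of p m] insert_at_Suc_in_RS_iff[of m p j] by auto
qed

lemma inj_on_insert_at:
  "inj_on (\<lambda>(p, j). insert_at j x p) {(p, j). x \<notin> set p \<and> j \<le> length p}"
proof (rule inj_onI, clarsimp)
  fix p j p' j'
  assume x: "x \<notin> set p" "x \<notin> set p'" and j: "j \<le> length p" "j' \<le> length p'"
    and eq: "insert_at j x p = insert_at j' x p'"
  have "x \<notin> set (take j p)" "x \<notin> set (drop j p)"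
    using x by (meson in_set_takeD in_set_dropD)+
  with eq have "take j p = take j' p' \<and> drop j p = drop j' p'"
    unfolding insert_at_def by (simp add: append_Cons_eq_iff)
  with j show "p = p' \<and> j = j'"
    by (metis append_take_drop_id length_take min.absorb2)
qed

lemma card_RS_Suc:
  "card {q \<in> RS (Suc m). \<phi> q} =
     (\<Sum>p\<in>RS m. card {j. j \<le> m \<and> \<not> desc_at p j \<and> \<phi> (insert_at j (Suc m) p)})"
proof -
  let ?ins = "\<lambda>(p, j). insert_at j (Suc m) p"
  let ?X = "SIGMA p:RS m. {j. j \<le> m \<and> \<not> desc_at p j \<and> \<phi> (insert_at j (Suc m) p)}"
  have "{q \<in> RS (Suc m). \<phi> q} = ?ins ` ?X"
    unfolding RS_Suc_eq_image by auto
  moreover have "inj_on ?ins ?X"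
    by (rule inj_on_subset[OF inj_on_insert_at]) (auto dest: RSD)
  ultimately have "card {q \<in> RS (Suc m). \<phi> q} = card ?X" by (simp add: card_image)
  also have "\<dots> = (\<Sum>p\<in>RS m. card {j. j \<le> m \<and> \<not> desc_at p j \<and> \<phi> (insert_at j (Suc m) p)})"
    using finite_RS by simp
  finally show ?thesis .
qed

lemma RS_max_less_Suc: "p \<in> RS m \<Longrightarrow> \<forall>y\<in>set p. y < Suc m"
  using RSD(1) by fastforce

lemma less_nth_Suc_iff_not_desc_at:
  assumes "distinct p" "Suc i < length p"
  shows "p ! i < p ! Suc i \<longleftrightarrow> \<not> desc_at p i"
proof -
  have "p ! i \<noteq> p ! Suc i" using assms by (simp add: nth_eq_iff_index_eq)
  with assms(2) show ?thesis by (auto simp: desc_at_def)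
qed

lemma pk_add_desc_at_0:
  assumes "distinct p" "\<not> has_double_descent p"
  shows "pk p + (if desc_at p 0 then 1 else 0) = des p"
proof -
  have "{i. 0 < i \<and> Suc i < length p \<and> p ! (i - 1) < p ! i \<and> p ! i > p ! Suc i} =
      {i. desc_at p i} - {0}"
  proof (rule set_eqI)
    fix i
    show "i \<in> {i. 0 < i \<and> Suc i < length p \<and> p ! (i - 1) < p ! i \<and> p ! i > p ! Suc i} \<longleftrightarrow>
        i \<in> {i. desc_at p i} - {0}"
    proof (cases i)
      case (Suc k)
      then show ?thesis
        using assms no_desc_at_Suc[of p k] less_nth_Suc_iff_not_desc_at[of p k]
        by (auto simp: desc_at_def)
    qed simp
  qed
  then show ?thesis
    using finite_desc_at[of p] des_pos_if_desc_at[of p 0]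
    by (simp add: pk_def des_eq_card_desc_at card_Diff_singleton_if)
qed

lemma uprun_add_desc_at_last:
  assumes "distinct p" "0 \<notin> set p" "\<not> has_double_descent p"
  shows "uprun p + (if desc_at p (length p - 2) then 1 else 0) = 2 * des p + 1"
proof -
  define D where "D = {i. desc_at p i}"
  define turns where
    "turns = {i. Suc i < length p \<and> (((0 # p) ! i < p ! i) \<noteq> (p ! i < p ! Suc i))}"
  have up_before: "(0 # p) ! i < p ! i \<longleftrightarrow> \<not> (0 < i \<and> desc_at p (i - 1))"
    if "Suc i < length p" for i
  proof (cases i)
    case 0
    have "p ! 0 \<in> set p" using that by (intro nth_mem) linarith
    with 0 show ?thesis using assms(2) by (auto intro: gr0I)
  next
    case (Suc k)
    then show ?thesis using assms(1) that less_nth_Suc_iff_not_desc_at[of p k] by simp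
  qed
  have "turns = D \<union> Suc ` (D - {length p - 2})"
  proof (rule set_eqI)
    fix i
    have "i \<in> Suc ` (D - {length p - 2}) \<longleftrightarrow> 0 < i \<and> desc_at p (i - 1) \<and> Suc i < length p"
      by (cases i) (auto simp: D_def dest: desc_at_imp_less_length)
    moreover have "0 < i \<Longrightarrow> desc_at p (i - 1) \<Longrightarrow> \<not> desc_at p i"
      using no_desc_at_Suc[OF assms(3), of "i - 1"] by simp
    ultimately show "i \<in> turns \<longleftrightarrow> i \<in> D \<union> Suc ` (D - {length p - 2})"
      using up_before[of i] less_nth_Suc_iff_not_desc_at[OF assms(1), of i]
      by (auto simp: turns_def D_def dest: desc_at_imp_less_length)
  qed
  moreover have "D \<inter> Suc ` (D - {length p - 2}) = {}"
    using no_desc_at_Suc[OF assms(3)] by (auto simp: D_def)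
  moreover have "finite D" by (simp add: D_def finite_desc_at)
  ultimately have "card turns = des p + (des p - (if desc_at p (length p - 2) then 1 else 0))"
    by (simp add: card_Un_disjoint card_image card_Diff_singleton_if des_eq_card_desc_at D_def)
  moreover have "uprun p = 1 + card turns"
  proof -
    have "{j. 0 < j \<and> Suc j < length (0 # p) \<and>
        (((0 # p) ! (j - 1) < (0 # p) ! j) \<noteq> ((0 # p) ! j < (0 # p) ! Suc j))} = Suc ` turns"
      by (auto simp: turns_def image_iff gr0_conv_Suc)
    then show ?thesis by (simp add: uprun_def alt_runs_def card_image)
  qed
  ultimately show ?thesis
    using des_pos_if_desc_at[of p "length p - 2"] by auto
qed

text \<open>The number of slots, other than one slot preserving the number of descents, at which
  inserting a new maximum into a word of length m with d descents and no double descents yields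
  e descents.\<close>

definition insertion_count :: "nat \<Rightarrow> nat \<Rightarrow> nat \<Rightarrow> nat" where
  "insertion_count m d e = (if e = d then d else if e = Suc d then m - 2 * d else 0)"

context
  fixes p :: "nat list" and x :: nat
  assumes x_max: "\<forall>y\<in>set p. y < x" and no_dd: "\<not> has_double_descent p"
begin

lemma card_slots_with_des_except:
  assumes s: "s = length p \<or> (0 < s \<and> desc_at p (s - 1))"
  shows "card {j. j \<le> length p \<and> \<not> desc_at p j \<and> j \<noteq> s \<and> des (insert_at j x p) = e} =
    insertion_count (length p) (des p) e"
proof -
  define slots where "slots = {j. j \<le> length p \<and> \<not> desc_at p j}"
  define keep where "keep = insert (length p) (Suc ` {i. desc_at p i})"
  have des_child: "des (insert_at j x p) = (if j \<in> keep then des p else Suc (des p))"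
    if "j \<le> length p" for j
    using des_insert_at[OF that x_max] by (cases j) (auto simp: keep_def)
  have keep_slots: "keep \<subseteq> slots"
    using no_desc_at_Suc[OF no_dd]
    by (auto simp: keep_def slots_def desc_at_def dest: desc_at_imp_less_length)
  have "slots = {..length p} - {i. desc_at p i}"
    by (auto simp: slots_def dest: desc_at_imp_less_length)
  moreover have "{i. desc_at p i} \<subseteq> {..length p}"
    by (auto dest: desc_at_imp_less_length)
  ultimately have card_slots: "card slots = Suc (length p) - des p"
    by (simp add: card_Diff_subset finite_desc_at des_eq_card_desc_at)
  have "length p \<notin> Suc ` {i. desc_at p i}" by (auto dest: desc_at_imp_less_length)
  then have card_keep: "card keep = Suc (des p)"
    by (simp add: keep_def card_image finite_desc_at des_eq_card_desc_at)
  have s_keep: "s \<in> keep" using s by (auto simp: keep_def image_iff intro: exI[of _ "s - 1"])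
  have "{j. j \<le> length p \<and> \<not> desc_at p j \<and> j \<noteq> s \<and> des (insert_at j x p) = e} =
      (if e = des p then keep - {s} else if e = Suc (des p) then slots - keep else {})"
    using keep_slots s_keep by (auto simp: des_child slots_def split: if_splits)
  moreover have "finite keep" by (simp add: keep_def finite_desc_at)
  ultimately show ?thesis
    using keep_slots s_keep card_slots card_keep by (simp add: insertion_count_def card_Diff_subset mult_2)
qed

lemma card_children_desc_at_0:
  assumes "0 < length p"
  shows "card {j. j \<le> length p \<and> \<not> desc_at p j \<and> desc_at (insert_at j x p) 0 \<and>
      des (insert_at j x p) = e} =
    (if desc_at p 0 then insertion_count (length p) (des p) e
     else if e = Suc (des p) then 1 else 0)"
proof (cases "desc_at p 0")
  case True
  have "desc_at (insert_at j x p) 0 \<longleftrightarrow> j \<noteq> 1" if "j \<le> length p" "\<not> desc_at p j" for j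
    using that True assms desc_at_0_insert_at[OF _ x_max, of j] by (cases "j = 0") auto
  then have "{j. j \<le> length p \<and> \<not> desc_at p j \<and> desc_at (insert_at j x p) 0 \<and>
      des (insert_at j x p) = e} =
    {j. j \<le> length p \<and> \<not> desc_at p j \<and> j \<noteq> 1 \<and> des (insert_at j x p) = e}"
    by blast
  with True show ?thesis by (simp add: card_slots_with_des_except)
next
  case False
  then have "{j. j \<le> length p \<and> \<not> desc_at p j \<and> desc_at (insert_at j x p) 0 \<and>
      des (insert_at j x p) = e} = (if e = Suc (des p) then {0} else {})"
    using assms desc_at_0_insert_at[OF _ x_max] des_insert_at[OF _ x_max, of 0] by auto
  with False show ?thesis by simp
qed

lemma card_children_desc_at_last:
  assumes "2 \<le> length p"
  shows "card {j. j \<le> length p \<and> \<not> desc_at p j \<and>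
      desc_at (insert_at j x p) (length (insert_at j x p) - 2) \<and> des (insert_at j x p) = e} =
    (if desc_at p (length p - 2) then insertion_count (length p) (des p) e
     else if e = Suc (des p) then 1 else 0)"
proof (cases "desc_at p (length p - 2)")
  case True
  then have "{j. j \<le> length p \<and> \<not> desc_at p j \<and>
      desc_at (insert_at j x p) (length (insert_at j x p) - 2) \<and> des (insert_at j x p) = e} =
    {j. j \<le> length p \<and> \<not> desc_at p j \<and> j \<noteq> length p \<and> des (insert_at j x p) = e}"
    using assms desc_at_last_insert_at[OF _ x_max] by auto
  with True show ?thesis by (simp add: card_slots_with_des_except)
next
  case False
  have "j \<le> length p \<and> \<not> desc_at p j \<and> desc_at (insert_at j x p) (length (insert_at j x p) - 2)
      \<longleftrightarrow> j = length p - 1" for j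
    using False assms desc_at_last_insert_at[OF _ x_max, of j]
    by (auto dest: desc_at_imp_less_length)
  then have "{j. j \<le> length p \<and> \<not> desc_at p j \<and>
      desc_at (insert_at j x p) (length (insert_at j x p) - 2) \<and> des (insert_at j x p) = e} =
    {j. j = length p - 1 \<and> des (insert_at j x p) = e}"
    by blast
  moreover have "des (insert_at (length p - 1) x p) = Suc (des p)"
    using False assms des_insert_at[OF _ x_max, of "length p - 1"]
    by (simp add: numeral_2_eq_2 Suc_diff_Suc)
  ultimately show ?thesis
    using False by (auto simp: Collect_conv_if)
qed

end

theorem card_RS_desc_at_0_eq_desc_at_last:
  "card {p \<in> RS m. desc_at p 0 \<and> des p = e} =
   card {p \<in> RS m. desc_at p (length p - 2) \<and> des p = e}"
proof (induction m arbitrary: e)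
  \<comment> \<open>For m \<le> 2 the truncated index length p - 2 is 0, so both sides count the same set.\<close>
  case 0
  show ?case by (intro arg_cong[where f = card] Collect_cong) (auto dest: RSD(3))
next
  case (Suc m)
  show ?case
  proof (cases "m < 2")
    case True
    then show ?thesis by (intro arg_cong[where f = card] Collect_cong) (auto dest: RSD(3))
  next
    case False
    define f where "f d = insertion_count m d e" for d
    define h where "h d = (if e = Suc d then 1 else 0 :: nat)" for d
    have "card {q \<in> RS (Suc m). desc_at q 0 \<and> des q = e} =
        (\<Sum>p\<in>RS m. if desc_at p 0 then f (des p) else h (des p))"
      unfolding card_RS_Suc
    proof (rule sum.cong[OF refl])
      fix p assume "p \<in> RS m"
      note hyps = RS_max_less_Suc[OF this] no_double_descent_RS[OF this] RSD(3)[OF this]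
      from False show "card {j. j \<le> m \<and> \<not> desc_at p j \<and>
          desc_at (insert_at j (Suc m) p) 0 \<and> des (insert_at j (Suc m) p) = e} =
        (if desc_at p 0 then f (des p) else h (des p))"
        using card_children_desc_at_0[OF hyps(1,2), of e] hyps(3)
        by (simp add: f_def h_def)
    qed
    also have "\<dots> = (\<Sum>p\<in>RS m. if desc_at p (length p - 2) then f (des p) else h (des p))"
      by (rule sum_if_eq_of_card_fibres_eq[OF finite_RS Suc.IH])
    also have "\<dots> = card {q \<in> RS (Suc m). desc_at q (length q - 2) \<and> des q = e}"
      unfolding card_RS_Suc
    proof (rule sum.cong[OF refl])
      fix p assume "p \<in> RS m"
      note hyps = RS_max_less_Suc[OF this] no_double_descent_RS[OF this] RSD(3)[OF this]
      from False show "(if desc_at p (length p - 2) then f (des p) else h (des p)) =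
        card {j. j \<le> m \<and> \<not> desc_at p j \<and>
          desc_at (insert_at j (Suc m) p) (length (insert_at j (Suc m) p) - 2) \<and>
          des (insert_at j (Suc m) p) = e}"
        using card_children_desc_at_last[OF hyps(1,2), of e] hyps(3)
        by (simp add: f_def h_def)
    qed
    finally show ?thesis .
  qed
qed

lemma uprun_RS:
  assumes "p \<in> RS n"
  shows "uprun p + (if desc_at p (length p - 2) then 1 else 0) = 2 * des p + 1"
  using uprun_add_desc_at_last[of p] RSD[OF assms] no_double_descent_RS[OF assms] by simp

lemma pk_RS:
  assumes "p \<in> RS n"
  shows "pk p + (if desc_at p 0 then 1 else 0) = des p"
  using pk_add_desc_at_0[of p] RSD[OF assms] no_double_descent_RS[OF assms] by simp

lemma S_eq_T: "S n k = T n (2 * k) + T n (2 * k + 1)"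
proof -
  have "des p = k \<longleftrightarrow> uprun p = 2 * k \<or> uprun p = 2 * k + 1" if "p \<in> RS n" for p
    using uprun_RS[OF that] by (simp split: if_splits; presburger)
  then have "{p \<in> RS n. des p = k} =
      {p \<in> RS n. uprun p = 2 * k} \<union> {p \<in> RS n. uprun p = 2 * k + 1}"
    by blast
  then show ?thesis
    unfolding S_def T_def by (simp add: card_Un_disjoint finite_RS disjoint_iff)
qed

lemma P_eq_T: "P n k = T n (2 * k + 1) + T n (2 * k + 2)"
proof -
  have "pk p = k \<longleftrightarrow> des p = (if desc_at p 0 then Suc k else k)" if "p \<in> RS n" for p
    using pk_RS[OF that] by auto
  then have "P n k = card {p \<in> RS n. des p = (if desc_at p 0 then Suc k else k)}"
    unfolding P_def by (metis (mono_tags, lifting) Collect_cong)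
  also have "\<dots> = card {p \<in> RS n. des p = (if desc_at p (length p - 2) then Suc k else k)}"
    by (rule card_if_eq_of_card_fibres_eq[OF finite_RS card_RS_desc_at_0_eq_desc_at_last])
  also have "des p = (if desc_at p (length p - 2) then Suc k else k) \<longleftrightarrow>
      uprun p = 2 * k + 1 \<or> uprun p = 2 * k + 2" if "p \<in> RS n" for p
    using uprun_RS[OF that] by (simp split: if_splits; presburger)
  then have "{p \<in> RS n. des p = (if desc_at p (length p - 2) then Suc k else k)} =
      {p \<in> RS n. uprun p = 2 * k + 1} \<union> {p \<in> RS n. uprun p = 2 * k + 2}"
    by blast
  finally show ?thesis
    unfolding T_def by (simp add: card_Un_disjoint finite_RS disjoint_iff)
qed

theorem mainTheorem8:
  fixes n k :: nat
  assumes "n \<ge> 1"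
  shows "S n k = T n (2 * k) + T n (2 * k + 1) \<and> P n k = T n (2 * k + 1) + T n (2 * k + 2)"
  using S_eq_T P_eq_T by blast

end
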